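(* Let $m\ge 2$, fix $i_1,\dots,i_m\in\{1,\dots,n\}$, and let $a,r,s,t\ge0$ be integers with $2a+r+(s+2)+t=m$. Then $$[\eta^ax^r\gamma^{s+2}\partial^t;i_1,\dots,i_m]=2(a+1)\,[\eta^{a+1}x^r\gamma^s\partial^t;i_1,\dots,i_m].$$
   Context: Fix $n\ge1$ and an invertible complex matrix $\eta=(\eta^{ij})$ with $\eta^{ij}=\eta^{ji}$. $W(2n|n)$ is the associative superalgebra generated by even $x^1,\dots,x^n,\partial_1,\dots,\partial_n$ and odd $\gamma^1,\dots,\gamma^n$ with relations $x^ix^j=x^jx^i$, $\partial_i\partial_j=\partial_j\partial_i$, $\partial_ix^j-x^j\partial_i=\delta_i^j$, $\gamma^i$ commuting with all $x^j,\partial_j$, $\gamma^i\gamma^j+\gamma^j\gamma^i=2\eta^{ij}$; $\partial^i:=\eta^{ij}\partial_j$ (summed). Bracket symbol: for integers $a,r,s,t\ge0$ with $2a+r+s+t=m$ and indices $i_1,\dots,i_m$, for $\sigma\in S_m$ put $T_\sigma:=\prod_{k=0}^{a-1}\eta^{i_{\sigma(2k+1)}i_{\sigma(2k+2)}}\cdot x^{i_{\sigma(2a+1)}}\cdots x^{i_{\sigma(2a+r)}}\cdot\gamma^{i_{\sigma(2a+r+1)}}\cdots\gamma^{i_{\sigma(2a+r+s)}}\cdot\partial^{i_{\sigma(2a+r+s+1)}}\cdots\partial^{i_{\sigma(m)}}$, and $[\eta^ax^r\gamma^s\partial^t;i_1,\dots,i_m]:=\frac{1}{2^a\,a!\,r!\,t!}\sum_{\sigma\in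 S_m}T_\sigma$; equivalently, the sum of $T_\sigma$ over one representative of each orbit of orderings under swapping the two indices within an $\eta$-pair, permuting the $\eta$-pairs, permuting the $x$-positions and permuting the $\partial$-positions. Factors with exponent $0$ are omitted, and the symbol is defined to be $0$ if the exponent of $x$ is negative. *)

theory Defs
  imports Complex_Main "HOL-Combinatorics.Permutations"
begin

text \<open>A complex associative algebra is modelled as a ring 'a together with a central
  ring homomorphism phi from the complex numbers (the structure map).  The elements
  x i, d i (= partial_i), g i (= gamma^i), i in 1..n, are required to satisfy the
  defining relations of W(2n|n).\<close>

definition WC_rels ::
  "nat \<Rightarrow> (nat \<Rightarrow> nat \<Rightarrow> complex) \<Rightarrow> (complex \<Rightarrow> 'a::ring_1)
   \<Rightarrow> (nat \<Rightarrow> 'a) \<Rightarrow> (nat \<Rightarrow> 'a) \<Rightarrow> (nat \<Rightarrow> 'a) \<Rightarrow> bool" where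
  "WC_rels n eta phi x d g \<longleftrightarrow>
     phi 1 = 1 \<and>
     (\<forall>u v. phi (u + v) = phi u + phi v) \<and>
     (\<forall>u v. phi (u * v) = phi u * phi v) \<and>
     (\<forall>u y. phi u * y = y * phi u) \<and>
     (\<forall>i\<in>{1..n}. \<forall>j\<in>{1..n}.
        x i * x j = x j * x i \<and>
        d i * d j = d j * d i \<and>
        d i * x j - x j * d i = (if i = j then 1 else 0) \<and>
        g i * x j = x j * g i \<and>
        g i * d j = d j * g i \<and>
        g i * g j + g j * g i = 2 * phi (eta i j))"

text \<open>raised derivative partial^i = sum_j eta^{ij} partial_j\<close>
definition dup ::
  "nat \<Rightarrow> (nat \<Rightarrow> nat \<Rightarrow> complex) \<Rightarrow> (complex \<Rightarrow> 'a::ring_1) \<Rightarrow> (nat \<Rightarrow> 'a) \<Rightarrow> nat \<Rightarrow> 'a" where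
  "dup n eta phi d i = (\<Sum>j=1..n. phi (eta i j) * d j)"

definition Tterm ::
  "nat \<Rightarrow> (nat \<Rightarrow> nat \<Rightarrow> complex) \<Rightarrow> (complex \<Rightarrow> 'a::ring_1)
   \<Rightarrow> (nat \<Rightarrow> 'a) \<Rightarrow> (nat \<Rightarrow> 'a) \<Rightarrow> (nat \<Rightarrow> 'a)
   \<Rightarrow> nat \<Rightarrow> nat \<Rightarrow> nat \<Rightarrow> nat \<Rightarrow> nat \<Rightarrow> (nat \<Rightarrow> nat) \<Rightarrow> (nat \<Rightarrow> nat) \<Rightarrow> 'a" where
  "Tterm n eta phi x d g a r s t m idx \<sigma> =
     phi (\<Prod>k<a. eta (idx (\<sigma> (2*k+1))) (idx (\<sigma> (2*k+2)))) *
     prod_list (map (\<lambda>p. x (idx (\<sigma> p))) [2*a+1..<2*a+r+1]) *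
     prod_list (map (\<lambda>p. g (idx (\<sigma> p))) [2*a+r+1..<2*a+r+s+1]) *
     prod_list (map (\<lambda>p. dup n eta phi d (idx (\<sigma> p))) [2*a+r+s+1..<m+1])"

definition bracket ::
  "nat \<Rightarrow> (nat \<Rightarrow> nat \<Rightarrow> complex) \<Rightarrow> (complex \<Rightarrow> 'a::ring_1)
   \<Rightarrow> (nat \<Rightarrow> 'a) \<Rightarrow> (nat \<Rightarrow> 'a) \<Rightarrow> (nat \<Rightarrow> 'a)
   \<Rightarrow> nat \<Rightarrow> nat \<Rightarrow> nat \<Rightarrow> nat \<Rightarrow> nat \<Rightarrow> (nat \<Rightarrow> nat) \<Rightarrow> 'a" where
  "bracket n eta phi x d g a r s t m idx =
     phi (1 / (2 ^ a * fact a * fact r * fact t)) *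
     (\<Sum>\<sigma>\<in>{\<sigma>. \<sigma> permutes {1..m}}. Tterm n eta phi x d g a r s t m idx \<sigma>)"

end

theory Submission
  imports Defs
begin

(* Peel the first two gamma letters off every term T_sigma and pair sigma with sigma composed
   with the transposition of their two slots.  The two terms of a pair differ only in the order
   gamma^u gamma^v versus gamma^v gamma^u, so by the Clifford relation and the symmetry of eta
   the pair has the same sum as the two terms with gamma^u gamma^v replaced by eta^(uv).
   Moving this new eta factor to the end of the eta block is a fixed permutation of the slots,
   which only reindexes the sum over S_m, so the unnormalised sums agree; the normalising
   constants differ by the factor 2^(a+1) (a+1)! / (2^a a!) = 2(a+1). *)

lemma WC_rels_phi_mult: "WC_rels n eta phi x d g \<Longrightarrow> phi (u * v) = phi u * phi v"
  unfolding WC_rels_def by blast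

lemma WC_rels_phi_commute: "WC_rels n eta phi x d g \<Longrightarrow> phi u * y = y * phi u"
  unfolding WC_rels_def by blast

lemma WC_rels_phi_of_nat:
  assumes "WC_rels n eta phi x d g"
  shows "phi (of_nat k) = of_nat k"
proof -
  have one: "phi 1 = 1" and add: "\<And>u v. phi (u + v) = phi u + phi v"
    using assms unfolding WC_rels_def by blast+
  have zero: "phi 0 = 0"
    using add[of 0 0] by simp
  show ?thesis
    by (induction k) (simp_all add: zero one add)
qed

lemma WC_rels_gamma_anticommute:
  "WC_rels n eta phi x d g \<Longrightarrow> i \<in> {1..n} \<Longrightarrow> j \<in> {1..n} \<Longrightarrow>
     g i * g j + g j * g i = 2 * phi (eta i j)"
  unfolding WC_rels_def by blast

lemma sum_by_pairing:
  assumes "finite S" "A \<subseteq> S" "inj_on k A" "k ` A = S - A"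
  shows "sum f S = (\<Sum>y\<in>A. f y + f (k y))"
proof -
  have "sum f S = sum f A + sum f (S - A)"
    using sum.subset_diff[OF assms(2,1)] by (simp add: add.commute)
  also have "sum f (S - A) = (\<Sum>y\<in>A. f (k y))"
    using sum.reindex[OF assms(3), of f] assms(4) by simp
  finally show ?thesis
    by (simp add: sum.distrib)
qed

lemma sum_permutations_by_transposition_pairs:
  fixes p q :: "'a::linorder"
  assumes "finite S" "p \<in> S" "q \<in> S" "p \<noteq> q"
  shows "(\<Sum>\<sigma> | \<sigma> permutes S. f \<sigma>)
       = (\<Sum>\<sigma> | \<sigma> permutes S \<and> \<sigma> p < \<sigma> q. f \<sigma> + f (\<sigma> \<circ> Transposition.transpose p q))"
proof (rule sum_by_pairing)
  let ?\<tau> = "Transposition.transpose p q"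
  let ?A = "{\<sigma>. \<sigma> permutes S \<and> \<sigma> p < \<sigma> q}"
  have \<tau>: "?\<tau> permutes S"
    using assms(2,3) by (rule permutes_swap_id)
  have \<tau>\<tau>: "\<sigma> \<circ> ?\<tau> \<circ> ?\<tau> = \<sigma>" for \<sigma> :: "'a \<Rightarrow> 'a"
    by (simp add: comp_assoc)
  show "inj_on (\<lambda>\<sigma>. \<sigma> \<circ> ?\<tau>) ?A"
    by (rule inj_onI) (metis \<tau>\<tau>)
  have "\<sigma> \<circ> ?\<tau> \<in> ?A" if "\<sigma> permutes S" "\<not> \<sigma> p < \<sigma> q" for \<sigma>
  proof -
    have "\<sigma> p \<noteq> \<sigma> q"
      using permutes_inj[OF that(1)] assms(4) by (meson injD)
    then show ?thesis
      using that permutes_compose[OF \<tau> that(1)] by (simp add: assms(4))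
  qed
  then have "\<sigma> \<in> (\<lambda>\<sigma>. \<sigma> \<circ> ?\<tau>) ` ?A" if "\<sigma> permutes S" "\<not> \<sigma> p < \<sigma> q" for \<sigma>
    using that by (intro image_eqI[where x = "\<sigma> \<circ> ?\<tau>"]) (simp_all add: \<tau>\<tau>)
  moreover have "\<sigma> \<circ> ?\<tau> \<in> {\<sigma>. \<sigma> permutes S} - ?A" if "\<sigma> \<in> ?A" for \<sigma>
    using that permutes_compose[OF \<tau>, of \<sigma>] by (auto simp: assms(4))
  ultimately show "(\<lambda>\<sigma>. \<sigma> \<circ> ?\<tau>) ` ?A = {\<sigma>. \<sigma> permutes S} - ?A"
    by blast
  show "finite {\<sigma>. \<sigma> permutes S}"
    using assms(1) by (rule finite_permutations)
qed blast

lemma map_upt_shift: "map f [i + k..<j + k] = map (\<lambda>p. f (p + k)) [i..<j]"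
  by (induction j) auto

(* The common shape of T_sigma for gamma^(s+2), with F u v = gamma^u gamma^v, and of
   T_(sigma o pair_shift a r) for eta^(a+1), with F u v = eta^(uv). *)
definition Tterm_pair ::
  "nat \<Rightarrow> (nat \<Rightarrow> nat \<Rightarrow> complex) \<Rightarrow> (complex \<Rightarrow> 'a::ring_1)
   \<Rightarrow> (nat \<Rightarrow> 'a) \<Rightarrow> (nat \<Rightarrow> 'a) \<Rightarrow> (nat \<Rightarrow> 'a)
   \<Rightarrow> nat \<Rightarrow> nat \<Rightarrow> nat \<Rightarrow> nat \<Rightarrow> (nat \<Rightarrow> nat \<Rightarrow> 'a) \<Rightarrow> (nat \<Rightarrow> nat) \<Rightarrow> (nat \<Rightarrow> nat) \<Rightarrow> 'a" where
  "Tterm_pair n eta phi x d g a r s m F idx \<sigma> =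
     phi (\<Prod>k<a. eta (idx (\<sigma> (2*k+1))) (idx (\<sigma> (2*k+2)))) *
     prod_list (map (\<lambda>p. x (idx (\<sigma> p))) [2*a+1..<2*a+r+1]) *
     F (idx (\<sigma> (2*a+r+1))) (idx (\<sigma> (2*a+r+2))) *
     prod_list (map (\<lambda>p. g (idx (\<sigma> p))) [2*a+r+3..<2*a+r+s+3]) *
     prod_list (map (\<lambda>p. dup n eta phi d (idx (\<sigma> p))) [2*a+r+s+3..<m+1])"

lemma Tterm_gamma_pair:
  "Tterm n eta phi x d g a r (s+2) t m idx \<sigma>
     = Tterm_pair n eta phi x d g a r s m (\<lambda>u v. g u * g v) idx \<sigma>"
proof -
  have tail: "2*a+r+(s+2)+1 = 2*a+r+s+3"
    by simp
  have gammas: "[2*a+r+1..<2*a+r+s+3] = (2*a+r+1) # (2*a+r+2) # [2*a+r+3..<2*a+r+s+3]"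
    by (simp add: upt_conv_Cons numeral_eq_Suc del: upt_Suc)
  show ?thesis
    unfolding Tterm_def Tterm_pair_def tail unfolding gammas
    by (simp only: list.map prod_list.Cons mult.assoc)
qed

lemma Tterm_pair_transpose:
  "Tterm_pair n eta phi x d g a r s m F idx (\<sigma> \<circ> Transposition.transpose (2*a+r+1) (2*a+r+2))
     = Tterm_pair n eta phi x d g a r s m (\<lambda>u v. F v u) idx \<sigma>"
  unfolding Tterm_pair_def
  by (intro arg_cong2[where f = "(*)"] arg_cong[where f = phi] arg_cong[where f = prod_list]
      prod.cong map_cong) auto

lemma Tterm_pair_symmetrize:
  "Tterm_pair n eta phi x d g a r s m F idx \<sigma>
     + Tterm_pair n eta phi x d g a r s m F idx (\<sigma> \<circ> Transposition.transpose (2*a+r+1) (2*a+r+2))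
   = Tterm_pair n eta phi x d g a r s m (\<lambda>u v. F u v + F v u) idx \<sigma>"
  unfolding Tterm_pair_transpose unfolding Tterm_pair_def by (simp add: algebra_simps)

definition pair_shift :: "nat \<Rightarrow> nat \<Rightarrow> nat \<Rightarrow> nat" where
  "pair_shift a r p =
     (if p = 2*a+1 then 2*a+r+1 else if p = 2*a+2 then 2*a+r+2
      else if 2*a+2 < p \<and> p \<le> 2*a+r+2 then p-2 else p)"

lemma pair_shift_permutes:
  assumes "2*a+r+2 \<le> m"
  shows "pair_shift a r permutes {1..m}"
proof (rule bij_imp_permutes)
  define q where "q y = (if y = 2*a+r+1 then 2*a+1 else if y = 2*a+r+2 then 2*a+2
      else if 2*a+1 \<le> y \<and> y < 2*a+r+1 then y+2 else y)" for y :: nat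
  show "bij_betw (pair_shift a r) {1..m} {1..m}"
    by (rule bij_betw_byWitness[where f' = q])
      (use assms in \<open>auto simp: q_def pair_shift_def\<close>)
  show "pair_shift a r y = y" if "y \<notin> {1..m}" for y
    using assms that by (auto simp: pair_shift_def)
qed

lemma Tterm_pair_shift:
  assumes "WC_rels n eta phi x d g"
  shows "Tterm n eta phi x d g (a+1) r s t m idx (\<sigma> \<circ> pair_shift a r)
     = Tterm_pair n eta phi x d g a r s m (\<lambda>u v. phi (eta u v)) idx \<sigma>"
proof -
  let ?\<rho> = "\<sigma> \<circ> pair_shift a r"
  define P where "P = (\<Prod>k<a. eta (idx (\<sigma> (2*k+1))) (idx (\<sigma> (2*k+2))))"
  define E where "E = eta (idx (\<sigma> (2*a+r+1))) (idx (\<sigma> (2*a+r+2)))"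
  define X where "X = prod_list (map (\<lambda>p. x (idx (\<sigma> p))) [2*a+1..<2*a+r+1])"
  define G where "G = prod_list (map (\<lambda>p. g (idx (\<sigma> p))) [2*a+r+3..<2*a+r+s+3])"
  define D where "D = prod_list (map (\<lambda>p. dup n eta phi d (idx (\<sigma> p))) [2*a+r+s+3..<m+1])"
  have "(\<Prod>k<a. eta (idx (?\<rho> (2*k+1))) (idx (?\<rho> (2*k+2)))) = P"
    unfolding P_def by (rule prod.cong) (auto simp: pair_shift_def)
  moreover have "?\<rho> (2*a+1) = \<sigma> (2*a+r+1)" "?\<rho> (2*a+2) = \<sigma> (2*a+r+2)"
    by (simp_all add: pair_shift_def)
  ultimately have etas: "(\<Prod>k<a+1. eta (idx (?\<rho> (2*k+1))) (idx (?\<rho> (2*k+2)))) = P * E"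
    unfolding E_def by simp
  have "map (\<lambda>p. x (idx (?\<rho> p))) [2*(a+1)+1..<2*(a+1)+r+1]
      = map (\<lambda>p. x (idx (?\<rho> (p+2)))) [2*a+1..<2*a+r+1]"
    using map_upt_shift[of "\<lambda>p. x (idx (?\<rho> p))" "2*a+1" 2 "2*a+r+1"] by simp
  also have "\<dots> = map (\<lambda>p. x (idx (\<sigma> p))) [2*a+1..<2*a+r+1]"
    by (rule map_cong) (auto simp: pair_shift_def)
  finally have xs: "prod_list (map (\<lambda>p. x (idx (?\<rho> p))) [2*(a+1)+1..<2*(a+1)+r+1]) = X"
    unfolding X_def by simp
  have bounds: "2*(a+1)+r+1 = 2*a+r+3" "2*(a+1)+r+s+1 = 2*a+r+s+3"
    by simp_all
  have gs: "prod_list (map (\<lambda>p. g (idx (?\<rho> p))) [2*(a+1)+r+1..<2*(a+1)+r+s+1]) = G"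
    unfolding G_def bounds
    by (intro arg_cong[where f = prod_list] map_cong) (auto simp: pair_shift_def)
  have ds: "prod_list (map (\<lambda>p. dup n eta phi d (idx (?\<rho> p))) [2*(a+1)+r+s+1..<m+1]) = D"
    unfolding D_def bounds
    by (intro arg_cong[where f = prod_list] map_cong) (auto simp: pair_shift_def)
  have "Tterm n eta phi x d g (a+1) r s t m idx ?\<rho> = phi (P * E) * X * G * D"
    unfolding Tterm_def etas xs gs ds ..
  also have "\<dots> = phi P * X * phi E * G * D"
    using WC_rels_phi_commute[OF assms, of E X]
    by (simp add: WC_rels_phi_mult[OF assms] mult.assoc)
  finally show ?thesis
    unfolding Tterm_pair_def P_def E_def X_def G_def D_def .
qed

lemma sum_Tterm_contract_gamma_pair:
  assumes rels: "WC_rels n eta phi x d g"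
    and eta_sym: "\<forall>i\<in>{1..n}. \<forall>j\<in>{1..n}. eta i j = eta j i"
    and idx: "\<forall>k\<in>{1..m}. idx k \<in> {1..n}"
    and m: "2*a + r + (s+2) + t = m"
  shows "(\<Sum>\<sigma> | \<sigma> permutes {1..m}. Tterm n eta phi x d g a r (s+2) t m idx \<sigma>)
       = (\<Sum>\<sigma> | \<sigma> permutes {1..m}. Tterm n eta phi x d g (a+1) r s t m idx \<sigma>)"
proof -
  let ?\<tau> = "Transposition.transpose (2*a+r+1) (2*a+r+2)"
  let ?A = "{\<sigma>. \<sigma> permutes {1..m} \<and> \<sigma> (2*a+r+1) < \<sigma> (2*a+r+2)}"
  let ?T = "\<lambda>F. Tterm_pair n eta phi x d g a r s m F idx"
  let ?gg = "\<lambda>u v. g u * g v"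
  let ?eta = "\<lambda>u v. phi (eta u v)"
  have slots: "2*a+r+1 \<in> {1..m}" "2*a+r+2 \<in> {1..m}"
    using m by auto
  have pairs: "?T ?gg \<sigma> + ?T ?gg (\<sigma> \<circ> ?\<tau>) = ?T ?eta \<sigma> + ?T ?eta (\<sigma> \<circ> ?\<tau>)"
    if "\<sigma> permutes {1..m}" for \<sigma>
  proof -
    let ?u = "idx (\<sigma> (2*a+r+1))" and ?v = "idx (\<sigma> (2*a+r+2))"
    have "?u \<in> {1..n}" "?v \<in> {1..n}"
      using idx slots permutes_in_image[OF that] by auto
    then have "g ?u * g ?v + g ?v * g ?u = phi (eta ?u ?v) + phi (eta ?v ?u)"
      using WC_rels_gamma_anticommute[OF rels] eta_sym by (simp add: mult_2)
    then show ?thesis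
      unfolding Tterm_pair_symmetrize by (simp add: Tterm_pair_def)
  qed
  have "(\<Sum>\<sigma> | \<sigma> permutes {1..m}. Tterm n eta phi x d g a r (s+2) t m idx \<sigma>)
      = (\<Sum>\<sigma> | \<sigma> permutes {1..m}. ?T ?gg \<sigma>)"
    by (simp only: Tterm_gamma_pair)
  also have "\<dots> = (\<Sum>\<sigma>\<in>?A. ?T ?gg \<sigma> + ?T ?gg (\<sigma> \<circ> ?\<tau>))"
    using slots by (intro sum_permutations_by_transposition_pairs) auto
  also have "\<dots> = (\<Sum>\<sigma>\<in>?A. ?T ?eta \<sigma> + ?T ?eta (\<sigma> \<circ> ?\<tau>))"
    using pairs by (intro sum.cong) auto
  also have "\<dots> = (\<Sum>\<sigma> | \<sigma> permutes {1..m}. ?T ?eta \<sigma>)"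
    using slots by (intro sum_permutations_by_transposition_pairs[symmetric]) auto
  also have "\<dots> = (\<Sum>\<sigma> | \<sigma> permutes {1..m}.
                      Tterm n eta phi x d g (a+1) r s t m idx (\<sigma> \<circ> pair_shift a r))"
    by (simp only: Tterm_pair_shift[OF rels])
  also have "\<dots> = (\<Sum>\<sigma> | \<sigma> permutes {1..m}. Tterm n eta phi x d g (a+1) r s t m idx \<sigma>)"
    using m by (intro sum_permutations_compose_right[symmetric] pair_shift_permutes) auto
  finally show ?thesis .
qed

lemma bracket_coeff_Suc:
  "of_nat (2*(a+1)) * (1 / (2^(a+1) * fact (a+1) * fact r * fact t) :: complex)
     = 1 / (2^a * fact a * fact r * fact t)"
proof -
  have denom: "(2^(a+1) * fact (a+1) * fact r * fact t :: complex)
      = of_nat (2*(a+1)) * (2^a * fact a * fact r * fact t)"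
    by (simp add: fact_Suc algebra_simps)
  have "(of_nat (2*(a+1)) :: complex) \<noteq> 0"
    by (simp only: of_nat_eq_0_iff) simp
  then show ?thesis
    unfolding denom by simp
qed

theorem lemma5p1:
  fixes n m a r s t :: nat
    and eta :: "nat \<Rightarrow> nat \<Rightarrow> complex"
    and phi :: "complex \<Rightarrow> 'a::ring_1"
    and x d g :: "nat \<Rightarrow> 'a"
    and idx :: "nat \<Rightarrow> nat"
  assumes "n \<ge> 1"
    and "\<forall>i\<in>{1..n}. \<forall>j\<in>{1..n}. eta i j = eta j i"
    and "\<exists>zeta. \<forall>i\<in>{1..n}. \<forall>j\<in>{1..n}.
           (\<Sum>k=1..n. eta i k * zeta k j) = (if i = j then 1 else 0)"
    and "WC_rels n eta phi x d g"
    and "m \<ge> 2"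
    and "\<forall>k\<in>{1..m}. idx k \<in> {1..n}"
    and "2*a + r + (s+2) + t = m"
  shows "bracket n eta phi x d g a r (s+2) t m idx
         = of_nat (2*(a+1)) * bracket n eta phi x d g (a+1) r s t m idx"
  unfolding bracket_def sum_Tterm_contract_gamma_pair[OF assms(4,2,6,7)]
    bracket_coeff_Suc[symmetric, of a r t]
    WC_rels_phi_mult[OF assms(4)] WC_rels_phi_of_nat[OF assms(4)]
  by (simp only: mult.assoc)

end
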